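(* Each of the following priors $\pi$ on $(0,\infty)$ satisfies assumptions A1, A2 and A3: (1) any distribution with bounded support satisfying A1 and A2 (e.g. the uniform distribution on $(0,c)$, $c>0$), for which A3 holds with any prescribed $\rho>0$; (2) the generalized Gamma distribution with density proportional to $\alpha^{d-1}e^{-(\alpha/a)^p}$ ($a,d>0$), provided $p>1$, for which A3 holds with any prescribed $\rho>0$; (3) the Gamma distribution with shape $\nu>0$ and rate $\rho>0$, for which A3 holds with this $\rho$.
   Context: (A1) $\pi$ is absolutely continuous w.r.t. Lebesgue measure, its density also denoted $\pi$; (A2) there exist $\epsilon,\delta,\beta$ such that $\frac1\delta\alpha^\beta\le\pi(\alpha)\le\delta\alpha^\beta$ for all $\alpha\in(0,\epsilon)$; (A3) there exist $D,\nu,\rho>0$ such that $\int\alpha^s\pi(\alpha)d\alpha<D\rho^{-s}\Gamma(\nu+s+1)$ for every integer $s\ge1$. *)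

theory Defs
  imports "HOL-Probability.Probability"
begin

definition prior_on_pos :: "real measure \<Rightarrow> bool" where
  "prior_on_pos M \<longleftrightarrow> prob_space M \<and> sets M = sets borel \<and> emeasure M {0<..} = 1"

definition A1 :: "real measure \<Rightarrow> (real \<Rightarrow> real) \<Rightarrow> bool" where
  "A1 M f \<longleftrightarrow> f \<in> borel_measurable borel \<and> (\<forall>x. 0 \<le> f x)
      \<and> M = density lborel (\<lambda>x. ennreal (f x))"

definition A2 :: "(real \<Rightarrow> real) \<Rightarrow> bool" where
  "A2 f \<longleftrightarrow> (\<exists>\<epsilon> \<delta> \<beta>. \<epsilon> > 0 \<and> \<delta> > 0 \<and>
      (\<forall>\<alpha>\<in>{0<..<\<epsilon>}. \<alpha> powr \<beta> / \<delta> \<le> f \<alpha> \<and> f \<alpha> \<le> \<delta> * \<alpha> powr \<beta>))"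

text \<open>(A3) with given constants rho and nu (the integral is a nonnegative Lebesgue integral
  over (0,infinity), so finiteness is part of the strict inequality).\<close>
definition A3_with :: "(real \<Rightarrow> real) \<Rightarrow> real \<Rightarrow> real \<Rightarrow> bool" where
  "A3_with f \<rho> \<nu> \<longleftrightarrow> (\<exists>D>0. \<forall>s::nat. s \<ge> 1 \<longrightarrow>
      (\<integral>\<^sup>+ \<alpha>\<in>{0<..}. ennreal (\<alpha> ^ s * f \<alpha>) \<partial>lborel)
        < ennreal (D * \<rho> powr (- real s) * Gamma (\<nu> + real s + 1)))"

definition A3_rho :: "(real \<Rightarrow> real) \<Rightarrow> real \<Rightarrow> bool" where
  "A3_rho f \<rho> \<longleftrightarrow> \<rho> > 0 \<and> (\<exists>\<nu>>0. A3_with f \<rho> \<nu>)"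

definition A3 :: "(real \<Rightarrow> real) \<Rightarrow> bool" where
  "A3 f \<longleftrightarrow> (\<exists>\<rho>. A3_rho f \<rho>)"

definition gen_gamma_kernel :: "real \<Rightarrow> real \<Rightarrow> real \<Rightarrow> real \<Rightarrow> real" where
  "gen_gamma_kernel a d p x = (if x > 0 then x powr (d - 1) * exp (- ((x / a) powr p)) else 0)"

definition gen_gamma_density :: "real \<Rightarrow> real \<Rightarrow> real \<Rightarrow> real \<Rightarrow> real" where
  "gen_gamma_density a d p x =
     gen_gamma_kernel a d p x / (\<integral>y. gen_gamma_kernel a d p y \<partial>lborel)"

definition gamma_density :: "real \<Rightarrow> real \<Rightarrow> real \<Rightarrow> real" where
  "gamma_density \<nu> \<rho> x =
     (if x > 0 then \<rho> powr \<nu> / Gamma \<nu> * x powr (\<nu> - 1) * exp (- \<rho> * x) else 0)"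

end

theory Submission
  imports Defs
begin

(* Everything reduces to bounds on the moments m_s = int_0^oo alpha^s f(alpha) d alpha.
  If f is supported in (0, c], then m_s <= c^s <= s! e^(c rho) rho^(-s), which is (A3) with nu = 1
  for every rho.  The Gamma kernel alpha^(nu-1) e^(-rho alpha) has m_s = Gamma(nu+s) / rho^(nu+s),
  which is below a constant times rho^(-s) Gamma(nu+s+1) since Gamma(nu+s+1) >= nu Gamma(nu+s).
  For p > 1, Young's inequality gives rho alpha <= (alpha/a)^p + K, so the generalized Gamma kernel
  is dominated by e^K times the Gamma kernel of shape d and arbitrary rate rho.  (A2) holds because
  near 0 each density is a power of alpha times a factor bounded away from 0 and infinity. *)

abbreviation pos_moment :: "(real \<Rightarrow> real) \<Rightarrow> nat \<Rightarrow> ennreal" where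
  "pos_moment f s \<equiv> \<integral>\<^sup>+ \<alpha>\<in>{0<..}. ennreal (\<alpha> ^ s * f \<alpha>) \<partial>lborel"

lemma pos_moment_cong:
  assumes "\<And>\<alpha>. \<alpha> > 0 \<Longrightarrow> f \<alpha> = g \<alpha>"
  shows "pos_moment f s = pos_moment g s"
  using assms by (intro set_nn_integral_cong) auto

lemma pos_moment_mono:
  assumes "\<And>\<alpha>. \<alpha> > 0 \<Longrightarrow> f \<alpha> \<le> g \<alpha>"
  shows "pos_moment f s \<le> pos_moment g s"
  using assms by (auto intro!: nn_integral_mono ennreal_leI mult_left_mono split: split_indicator)

lemma pos_moment_cmult:
  assumes [measurable]: "f \<in> borel_measurable borel" and "0 \<le> C"
  shows "pos_moment (\<lambda>\<alpha>. C * f \<alpha>) s = ennreal C * pos_moment f s"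
proof -
  have "ennreal (\<alpha> ^ s * (C * f \<alpha>)) = ennreal C * ennreal (\<alpha> ^ s * f \<alpha>)" for \<alpha>
    using \<open>0 \<le> C\<close> by (simp add: ennreal_mult' mult.left_commute)
  then show ?thesis by (simp add: nn_integral_cmult mult.assoc)
qed

lemma pos_moment_pos:
  assumes [measurable]: "f \<in> borel_measurable borel" and pos: "\<And>\<alpha>. \<alpha> > 0 \<Longrightarrow> f \<alpha> > 0"
  shows "pos_moment f s > 0"
proof (rule ccontr)
  assume "\<not> pos_moment f s > 0"
  then have "emeasure lborel {\<alpha>. ennreal (\<alpha> ^ s * f \<alpha>) * indicator {0<..} \<alpha> \<noteq> 0} = 0"
    by (simp add: nn_integral_0_iff)
  moreover have "\<alpha> ^ s * f \<alpha> > 0" if "\<alpha> > 0" for \<alpha> using pos[OF that] that by simp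
  then have "{\<alpha>. ennreal (\<alpha> ^ s * f \<alpha>) * indicator {0<..} \<alpha> \<noteq> 0} = {0<..}"
    by (auto simp: indicator_def ennreal_eq_0_iff not_le)
  moreover have "emeasure lborel {0<..<1::real} \<le> emeasure lborel {0::real<..}"
    by (intro emeasure_mono) auto
  ultimately show False by simp
qed

lemma nn_integral_powr_exp:
  fixes x r :: real
  assumes x: "x > 0" and r: "r > 0"
  shows "(\<integral>\<^sup>+t\<in>{0<..}. ennreal (t powr (x - 1) * exp (- r * t)) \<partial>lborel)
      = ennreal (Gamma x / r powr x)" (is "?I = _")
proof -
  define g where "g t = ennreal (indicator {0..} t * t powr (x - 1) / exp t)" for t :: real
  have [measurable]: "g \<in> borel_measurable borel" unfolding g_def by measurable
  have g_scaled: "g (0 + r * t) = ennreal (r powr (x - 1)) *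
      (ennreal (t powr (x - 1) * exp (- r * t)) * indicator {0<..} t)" for t
  proof (cases "t > 0")
    case True
    then show ?thesis using r
      by (simp add: g_def powr_mult exp_minus field_simps flip: ennreal_mult)
  qed (use r in \<open>auto simp: g_def indicator_def zero_le_mult_iff\<close>)
  have "ennreal (Gamma x) = ennreal r * (\<integral>\<^sup>+t. g (0 + r * t) \<partial>lborel)"
    using Gamma_conv_nn_integral_real[OF x] nn_integral_real_affine[of g r 0] r by (simp add: g_def)
  also have "\<dots> = ennreal r * ennreal (r powr (x - 1)) * ?I"
    unfolding g_scaled by (simp add: nn_integral_cmult mult.assoc)
  also have "ennreal r * ennreal (r powr (x - 1)) = ennreal (r powr x)"
    using r by (simp add: powr_mult_base flip: ennreal_mult)
  finally have "ennreal (Gamma x) = ?I * ennreal (r powr x)"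
    by (simp add: mult.commute)
  then have "?I = ennreal (Gamma x) / ennreal (r powr x)"
    using r by (simp add: ennreal_mult_divide_eq)
  then show ?thesis using r x by (simp add: divide_ennreal)
qed

lemma pos_moment_powr_exp:
  fixes \<nu> r :: real
  assumes "\<nu> > 0" and "r > 0"
  shows "pos_moment (\<lambda>\<alpha>. \<alpha> powr (\<nu> - 1) * exp (- r * \<alpha>)) s
      = ennreal (Gamma (\<nu> + s) / r powr (\<nu> + s))"
proof -
  have "\<alpha> ^ s * (\<alpha> powr (\<nu> - 1) * exp (- r * \<alpha>)) = \<alpha> powr ((\<nu> + s) - 1) * exp (- r * \<alpha>)"
    if "\<alpha> > 0" for \<alpha>
    using that by (simp add: powr_realpow[symmetric] powr_add[symmetric] algebra_simps)
  then have "pos_moment (\<lambda>\<alpha>. \<alpha> powr (\<nu> - 1) * exp (- r * \<alpha>)) s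
      = (\<integral>\<^sup>+t\<in>{0<..}. ennreal (t powr ((\<nu> + s) - 1) * exp (- r * t)) \<partial>lborel)"
    by (intro set_nn_integral_cong) auto
  also have "\<dots> = ennreal (Gamma (\<nu> + s) / r powr (\<nu> + s))"
    using assms by (intro nn_integral_powr_exp) auto
  finally show ?thesis .
qed

lemma prior_on_pos_density:
  fixes f :: "real \<Rightarrow> real"
  assumes [measurable]: "f \<in> borel_measurable borel"
    and vanish: "\<And>x. x \<le> 0 \<Longrightarrow> f x = 0" and mass: "pos_moment f 0 = 1"
  shows "prior_on_pos (density lborel (\<lambda>x. ennreal (f x)))"
proof -
  have mass_on: "emeasure (density lborel (\<lambda>x. ennreal (f x))) A = 1"
    if [measurable]: "A \<in> sets borel" and "{0<..} \<subseteq> A" for A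
  proof -
    have "emeasure (density lborel (\<lambda>x. ennreal (f x))) A = pos_moment f 0"
      using \<open>{0<..} \<subseteq> A\<close> vanish
      by (auto simp: emeasure_density intro!: nn_integral_cong split: split_indicator)
    then show ?thesis using mass by simp
  qed
  have "prob_space (density lborel (\<lambda>x. ennreal (f x)))"
    using mass_on[of UNIV] by (intro prob_spaceI) simp
  then show ?thesis
    unfolding prior_on_pos_def using mass_on[of "{0<..}"] by simp
qed

lemma A1_density:
  "f \<in> borel_measurable borel \<Longrightarrow> (\<And>x. 0 \<le> f x) \<Longrightarrow> A1 (density lborel (\<lambda>x. ennreal (f x))) f"
  unfolding A1_def by simp

lemma A2I:
  assumes "\<epsilon> > 0" "L > 0"
    and factor: "\<And>\<alpha>. \<alpha> \<in> {0<..<\<epsilon>} \<Longrightarrow> f \<alpha> = \<alpha> powr \<beta> * g \<alpha>"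
    and bounds: "\<And>\<alpha>. \<alpha> \<in> {0<..<\<epsilon>} \<Longrightarrow> L \<le> g \<alpha> \<and> g \<alpha> \<le> U"
  shows "A2 f"
  unfolding A2_def
proof (intro exI conjI ballI)
  show "\<epsilon> > 0" "max U (1 / L) > 0" using assms(1,2) by (auto simp: less_max_iff_disj)
  fix \<alpha> assume \<alpha>: "\<alpha> \<in> {0<..<\<epsilon>}"
  have "inverse (max U (1 / L)) \<le> inverse (1 / L)"
    using assms(2) by (intro le_imp_inverse_le) auto
  then have "1 / max U (1 / L) \<le> L" by (simp add: inverse_eq_divide)
  also have "L \<le> g \<alpha>" using bounds[OF \<alpha>] by simp
  finally have "\<alpha> powr \<beta> * (1 / max U (1 / L)) \<le> \<alpha> powr \<beta> * g \<alpha>"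
    by (intro mult_left_mono) auto
  then show "\<alpha> powr \<beta> / max U (1 / L) \<le> f \<alpha>" using factor[OF \<alpha>] by simp
  have "g \<alpha> \<le> max U (1 / L)" using bounds[OF \<alpha>] by (simp add: le_max_iff_disj)
  then have "\<alpha> powr \<beta> * g \<alpha> \<le> \<alpha> powr \<beta> * max U (1 / L)"
    by (intro mult_left_mono) auto
  then show "f \<alpha> \<le> max U (1 / L) * \<alpha> powr \<beta>" using factor[OF \<alpha>] by (simp add: mult.commute)
qed

lemma A3I: "A3_rho f \<rho> \<Longrightarrow> A3 f"
  unfolding A3_def by blast

lemma A3_with_of_gamma_moment_bound:
  fixes B \<nu> \<rho> :: real
  assumes B: "B > 0" and \<nu>: "\<nu> > 0" and \<rho>: "\<rho> > 0"
    and bound: "\<And>s. s \<ge> 1 \<Longrightarrow> pos_moment f s \<le> ennreal (B * Gamma (\<nu> + s) / \<rho> powr (\<nu> + s))"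
  shows "A3_with f \<rho> \<nu>"
  unfolding A3_with_def
proof (intro exI[of _ "2 * B / (\<nu> * \<rho> powr \<nu>)"] conjI allI impI)
  show "2 * B / (\<nu> * \<rho> powr \<nu>) > 0" using assms by simp
  fix s :: nat assume "s \<ge> 1"
  have Gamma_pos: "Gamma (\<nu> + s) > 0" using \<nu> by simp
  have Gamma_step: "Gamma (\<nu> + s + 1) = (\<nu> + s) * Gamma (\<nu> + s)"
    using \<nu> by (intro Gamma_plus1) (auto dest: nonpos_Ints_nonpos)
  have "1 < 2 * (\<nu> + s) / \<nu>" using \<nu> by (simp add: field_simps)
  then have "B * Gamma (\<nu> + s) / \<rho> powr (\<nu> + s)
      < B * Gamma (\<nu> + s) / \<rho> powr (\<nu> + s) * (2 * (\<nu> + s) / \<nu>)"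
    using B \<rho> Gamma_pos by (subst mult_less_cancel_left1) (simp add: not_le)
  also have "\<dots> = 2 * B / (\<nu> * \<rho> powr \<nu>) * \<rho> powr (- real s) * Gamma (\<nu> + s + 1)"
    using \<rho> \<nu> Gamma_step by (simp add: powr_minus powr_add field_simps)
  finally have "ennreal (B * Gamma (\<nu> + s) / \<rho> powr (\<nu> + s))
      < ennreal (2 * B / (\<nu> * \<rho> powr \<nu>) * \<rho> powr (- real s) * Gamma (\<nu> + s + 1))"
    using B \<rho> Gamma_pos by (subst ennreal_less_iff) auto
  with bound[OF \<open>s \<ge> 1\<close>] show "pos_moment f s
      < ennreal (2 * B / (\<nu> * \<rho> powr \<nu>) * \<rho> powr (- real s) * Gamma (\<nu> + s + 1))"
    by (rule le_less_trans)
qed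

lemma power_le_fact_mult_exp:
  fixes x :: real
  assumes "0 \<le> x"
  shows "x ^ n \<le> fact n * exp x"
proof -
  have "(\<Sum>k\<in>{n}. x ^ k /\<^sub>R fact k) \<le> (\<Sum>k. x ^ k /\<^sub>R fact k)"
    using exp_converges[of x] assms by (intro sum_le_suminf) (auto simp: sums_iff)
  then have "x ^ n / fact n \<le> exp x"
    using exp_converges[of x] by (simp add: sums_iff divide_inverse_commute)
  then show ?thesis by (simp add: divide_le_eq mult.commute)
qed

lemma A3_with_of_moment_le_power:
  fixes c \<rho> :: real
  assumes c: "c \<ge> 0" and \<rho>: "\<rho> > 0" and bound: "\<And>s. pos_moment f s \<le> ennreal (c ^ s)"
  shows "A3_with f \<rho> 1"
  unfolding A3_with_def
proof (intro exI[of _ "exp (c * \<rho>) + 1"] conjI allI impI)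
  show "exp (c * \<rho>) + 1 > 0" by (simp add: add_pos_pos)
  fix s :: nat
  have "(c * \<rho>) ^ s \<le> fact s * exp (c * \<rho>)"
    using c \<rho> by (intro power_le_fact_mult_exp) simp
  also have "\<dots> < fact (s + 1) * (exp (c * \<rho>) + 1)"
    by (intro mult_le_less_imp_less) (auto simp: fact_mono)
  also have "fact (s + 1) = Gamma (1 + real s + 1)"
    using Gamma_fact[of "s + 1", where 'a = real] by (simp add: add_ac)
  finally have "c ^ s < (exp (c * \<rho>) + 1) * \<rho> powr (- real s) * Gamma (1 + real s + 1)"
    using \<rho> by (simp add: power_mult_distrib powr_minus powr_realpow field_simps)
  then have "ennreal (c ^ s)
      < ennreal ((exp (c * \<rho>) + 1) * \<rho> powr (- real s) * Gamma (1 + real s + 1))"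
    using c by (subst ennreal_less_iff) auto
  with bound show "pos_moment f s
      < ennreal ((exp (c * \<rho>) + 1) * \<rho> powr (- real s) * Gamma (1 + real s + 1))"
    by (rule le_less_trans)
qed

lemma A1_AE_vanish_outside:
  assumes prior: "prior_on_pos M" and "A1 M f" and [measurable]: "A \<in> sets borel"
    and full: "emeasure M A = 1"
  shows "AE x in lborel. x \<notin> A \<longrightarrow> f x = 0"
proof -
  have [measurable]: "f \<in> borel_measurable borel" and f_nonneg: "\<And>x. 0 \<le> f x"
    and M: "M = density lborel (\<lambda>x. ennreal (f x))" using \<open>A1 M f\<close> unfolding A1_def by auto
  have "prob_space M" and sets_M: "sets M = sets borel"
    using prior unfolding prior_on_pos_def by auto
  moreover have "space M = UNIV" using sets_eq_imp_space_eq[OF sets_M] by simp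
  ultimately have "emeasure M UNIV = 1" by (metis prob_space.emeasure_space_1)
  moreover have "emeasure M (UNIV - A) = emeasure M UNIV - emeasure M A"
    using full sets_M by (intro emeasure_Diff) auto
  ultimately have "emeasure M (UNIV - A) = 0" using full by simp
  then have "AE x in lborel. ennreal (f x) * indicator (UNIV - A) x = 0"
    unfolding M by (simp add: emeasure_density nn_integral_0_iff_AE)
  then show ?thesis
    by eventually_elim (use f_nonneg in \<open>auto simp: indicator_def\<close>)
qed

lemma pos_moment_le_power_of_support:
  assumes prior: "prior_on_pos M" and support: "emeasure M {0<..c} = 1" and "A1 M f"
  shows "pos_moment f s \<le> ennreal (c ^ s)"
proof -
  have [measurable]: "f \<in> borel_measurable borel" and f_nonneg: "\<And>x. 0 \<le> f x"
    and M: "M = density lborel (\<lambda>x. ennreal (f x))" using \<open>A1 M f\<close> unfolding A1_def by auto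
  have vanish: "AE x in lborel. x \<notin> {0<..c} \<longrightarrow> f x = 0"
    by (rule A1_AE_vanish_outside[OF prior \<open>A1 M f\<close> _ support]) simp
  have "pos_moment f s \<le> (\<integral>\<^sup>+ \<alpha>. ennreal (c ^ s) * (ennreal (f \<alpha>) * indicator {0<..c} \<alpha>) \<partial>lborel)"
    using vanish
  proof (intro nn_integral_mono_AE, eventually_elim)
    case (elim \<alpha>)
    show ?case
    proof (cases "\<alpha> \<in> {0<..c}")
      case True
      then have "\<alpha> ^ s * f \<alpha> \<le> c ^ s * f \<alpha>"
        using f_nonneg by (intro mult_right_mono power_mono) auto
      then show ?thesis using True by (simp add: ennreal_leI flip: ennreal_mult')
    qed (use elim in \<open>auto simp: indicator_def\<close>)
  qed
  also have "\<dots> = ennreal (c ^ s) * emeasure M {0<..c}"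
    unfolding M by (simp add: nn_integral_cmult emeasure_density)
  finally show ?thesis using support by simp
qed

lemma A3_rho_of_bounded_support:
  assumes prior: "prior_on_pos M" and support: "emeasure M {0<..c} = 1" and "A1 M f"
    and "\<rho> > 0"
  shows "A3_rho f \<rho>"
proof -
  have "c \<ge> 0"
  proof (rule ccontr)
    assume "\<not> c \<ge> 0"
    then have "{0<..c} = {}" by auto
    with support show False by simp
  qed
  moreover have "pos_moment f s \<le> ennreal (c ^ s)" for s
    using prior support \<open>A1 M f\<close> by (rule pos_moment_le_power_of_support)
  ultimately have "A3_with f \<rho> 1"
    using \<open>\<rho> > 0\<close> by (intro A3_with_of_moment_le_power)
  with \<open>\<rho> > 0\<close> zero_less_one show ?thesis unfolding A3_rho_def by blast
qed

lemma linear_le_powr_plus_const: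
  fixes a p r :: real
  assumes a: "a > 0" and p: "p > 1" and r: "r \<ge> 0"
  obtains K where "\<And>x. x \<ge> 0 \<Longrightarrow> r * x \<le> (x / a) powr p + K"
proof
  define q where "q = p / (p - 1)"
  have q: "q > 1" "1 / p + 1 / q = 1" using p by (auto simp: q_def field_simps)
  fix x :: real assume "x \<ge> 0"
  have "r * x = (x / a) * (r * a)" using a by simp
  also have "\<dots> \<le> (x / a) powr p / p + (r * a) powr q / q"
    using \<open>x \<ge> 0\<close> a r p q by (intro Youngs_inequality) auto
  also have "(x / a) powr p / p \<le> (x / a) powr p"
    using p by (simp add: divide_le_eq mult_le_cancel_left1)
  finally show "r * x \<le> (x / a) powr p + (r * a) powr q / q" by simp
qed

lemma borel_measurable_gen_gamma_kernel [measurable]: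
  "gen_gamma_kernel a d p \<in> borel_measurable borel"
  unfolding gen_gamma_kernel_def by measurable

lemma gen_gamma_kernel_le_gamma_kernel:
  fixes a d p \<rho> :: real
  assumes "a > 0" "p > 1" "\<rho> \<ge> 0"
  obtains C where "C > 0"
    "\<And>x. x > 0 \<Longrightarrow> gen_gamma_kernel a d p x \<le> C * (x powr (d - 1) * exp (- \<rho> * x))"
proof -
  obtain K where K: "\<And>x. x \<ge> 0 \<Longrightarrow> \<rho> * x \<le> (x / a) powr p + K"
    using linear_le_powr_plus_const assms by blast
  have "gen_gamma_kernel a d p x \<le> exp K * (x powr (d - 1) * exp (- \<rho> * x))" if "x > 0" for x
  proof -
    have "exp (- ((x / a) powr p)) \<le> exp K * exp (- \<rho> * x)"
      using K[of x] that by (simp flip: exp_add)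
    then show ?thesis
      using that by (simp add: gen_gamma_kernel_def mult.left_commute mult_left_mono)
  qed
  then show thesis using that[of "exp K"] by simp
qed

lemma pos_moment_gen_gamma_kernel_le:
  fixes a d p \<rho> :: real
  assumes "a > 0" "d > 0" "p > 1" "\<rho> > 0"
  obtains C where "C > 0"
    "\<And>s. pos_moment (gen_gamma_kernel a d p) s \<le> ennreal (C * Gamma (d + s) / \<rho> powr (d + s))"
proof -
  obtain C where "C > 0"
    and C: "\<And>x. x > 0 \<Longrightarrow> gen_gamma_kernel a d p x \<le> C * (x powr (d - 1) * exp (- \<rho> * x))"
    using gen_gamma_kernel_le_gamma_kernel[of a p \<rho> d] assms by auto
  have "pos_moment (gen_gamma_kernel a d p) s
      \<le> pos_moment (\<lambda>x. C * (x powr (d - 1) * exp (- \<rho> * x))) s" for s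
    using C by (rule pos_moment_mono)
  also have "\<dots> s = ennreal C * pos_moment (\<lambda>x. x powr (d - 1) * exp (- \<rho> * x)) s" for s
    using \<open>C > 0\<close> by (intro pos_moment_cmult) auto
  also have "\<dots> s = ennreal (C * Gamma (d + s) / \<rho> powr (d + s))" for s
    using \<open>C > 0\<close> assms by (subst pos_moment_powr_exp) (auto simp flip: ennreal_mult')
  finally show thesis using that \<open>C > 0\<close> by blast
qed

lemma gen_gamma_normalization:
  fixes a d p :: real
  assumes "a > 0" "d > 0" "p > 1"
  defines "Z \<equiv> \<integral>y. gen_gamma_kernel a d p y \<partial>lborel"
  shows "pos_moment (gen_gamma_kernel a d p) 0 = ennreal Z" and "Z > 0"
proof -
  have nonneg: "gen_gamma_kernel a d p x \<ge> 0" for x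
    by (simp add: gen_gamma_kernel_def)
  have total: "(\<integral>\<^sup>+ y. ennreal (gen_gamma_kernel a d p y) \<partial>lborel)
      = pos_moment (gen_gamma_kernel a d p) 0"
    by (intro nn_integral_cong) (simp add: gen_gamma_kernel_def indicator_def)
  obtain C where
    "\<And>s. pos_moment (gen_gamma_kernel a d p) s \<le> ennreal (C * Gamma (d + s) / 1 powr (d + s))"
    using pos_moment_gen_gamma_kernel_le[OF assms(1-3) zero_less_one] by blast
  then have "(\<integral>\<^sup>+ y. ennreal (gen_gamma_kernel a d p y) \<partial>lborel) < \<infinity>"
    unfolding total by (rule le_less_trans) simp
  then have "integrable lborel (gen_gamma_kernel a d p)"
    using nonneg by (intro integrableI_bounded) simp_all
  then show mass: "pos_moment (gen_gamma_kernel a d p) 0 = ennreal Z"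
    unfolding Z_def total[symmetric] using nonneg by (simp add: nn_integral_eq_integral)
  have "pos_moment (gen_gamma_kernel a d p) 0 > 0"
    by (rule pos_moment_pos) (simp_all add: gen_gamma_kernel_def)
  then show "Z > 0" unfolding mass by simp
qed

lemma pos_moment_gen_gamma_density:
  fixes a d p :: real
  defines "Z \<equiv> \<integral>y. gen_gamma_kernel a d p y \<partial>lborel"
  shows "pos_moment (gen_gamma_density a d p) s
    = ennreal (1 / Z) * pos_moment (gen_gamma_kernel a d p) s"
proof -
  have "Z \<ge> 0" unfolding Z_def by (intro integral_nonneg_AE) (simp add: gen_gamma_kernel_def)
  have density: "gen_gamma_density a d p = (\<lambda>x. 1 / Z * gen_gamma_kernel a d p x)"
    by (simp add: gen_gamma_density_def Z_def fun_eq_iff)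
  show ?thesis
    unfolding density by (rule pos_moment_cmult) (simp_all add: \<open>Z \<ge> 0\<close>)
qed

lemma A3_rho_gen_gamma_density:
  fixes a d p \<rho> :: real
  assumes a: "a > 0" and d: "d > 0" and p: "p > 1" and \<rho>: "\<rho> > 0"
  shows "A3_rho (gen_gamma_density a d p) \<rho>"
proof -
  define Z where "Z = (\<integral>y. gen_gamma_kernel a d p y \<partial>lborel)"
  have Z: "Z > 0" using gen_gamma_normalization[OF a d p] unfolding Z_def by simp
  obtain C where C: "C > 0"
    "\<And>s. pos_moment (gen_gamma_kernel a d p) s \<le> ennreal (C * Gamma (d + s) / \<rho> powr (d + s))"
    using pos_moment_gen_gamma_kernel_le[OF a d p \<rho>] by blast
  have "pos_moment (gen_gamma_density a d p) s
      \<le> ennreal (C / Z * Gamma (d + s) / \<rho> powr (d + s))" for s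
  proof -
    have "pos_moment (gen_gamma_density a d p) s
        \<le> ennreal (1 / Z) * ennreal (C * Gamma (d + s) / \<rho> powr (d + s))"
      unfolding pos_moment_gen_gamma_density Z_def[symmetric] by (intro mult_left_mono C) simp
    also have "\<dots> = ennreal (C / Z * Gamma (d + s) / \<rho> powr (d + s))"
      using Z by (simp flip: ennreal_mult')
    finally show ?thesis .
  qed
  then have "A3_with (gen_gamma_density a d p) \<rho> d"
    using C Z d \<rho> by (intro A3_with_of_gamma_moment_bound[of "C / Z"]) auto
  with \<rho> d show ?thesis unfolding A3_rho_def by blast
qed

lemma gen_gamma_prior_assumptions:
  fixes a d p :: real
  assumes a: "a > 0" and d: "d > 0" and p: "p > 1"
  defines "f \<equiv> gen_gamma_density a d p"
  shows "prior_on_pos (density lborel (\<lambda>x. ennreal (f x)))"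
    and "A1 (density lborel (\<lambda>x. ennreal (f x))) f"
    and "A2 f"
    and "\<And>\<rho>. \<rho> > 0 \<Longrightarrow> A3_rho f \<rho>"
proof -
  define Z where "Z = (\<integral>y. gen_gamma_kernel a d p y \<partial>lborel)"
  have Z: "Z > 0" and mass: "pos_moment (gen_gamma_kernel a d p) 0 = ennreal Z"
    using gen_gamma_normalization[OF a d p] unfolding Z_def by auto
  have f_eq: "f = (\<lambda>x. 1 / Z * gen_gamma_kernel a d p x)"
    by (simp add: f_def gen_gamma_density_def Z_def fun_eq_iff)
  have [measurable]: "f \<in> borel_measurable borel" unfolding f_eq by measurable
  have "f x = 0" if "x \<le> 0" for x using that by (simp add: f_eq gen_gamma_kernel_def)
  moreover have "pos_moment f 0 = 1"
    using pos_moment_gen_gamma_density[where a = a and d = d and p = p and s = 0] mass Z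
    by (simp add: f_def Z_def[symmetric] flip: ennreal_mult')
  ultimately show "prior_on_pos (density lborel (\<lambda>x. ennreal (f x)))"
    by (intro prior_on_pos_density) auto
  show "A1 (density lborel (\<lambda>x. ennreal (f x))) f"
    using Z by (intro A1_density) (auto simp: f_eq gen_gamma_kernel_def)
  show "A2 f"
  proof (rule A2I[of a "exp (- 1) / Z" f "d - 1" "\<lambda>\<alpha>. exp (- ((\<alpha> / a) powr p)) / Z"])
    fix \<alpha> :: real assume \<alpha>: "\<alpha> \<in> {0<..<a}"
    then show "f \<alpha> = \<alpha> powr (d - 1) * (exp (- ((\<alpha> / a) powr p)) / Z)"
      by (simp add: f_eq gen_gamma_kernel_def)
    have "(\<alpha> / a) powr p \<le> 1" using \<alpha> a p by (intro powr_le1) auto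
    then show "exp (- 1) / Z \<le> exp (- ((\<alpha> / a) powr p)) / Z
        \<and> exp (- ((\<alpha> / a) powr p)) / Z \<le> 1 / Z"
      using Z by (auto intro: divide_right_mono)
  qed (use a Z in auto)
  show "A3_rho f \<rho>" if "\<rho> > 0" for \<rho>
    unfolding f_def using a d p that by (rule A3_rho_gen_gamma_density)
qed

lemma pos_moment_gamma_density:
  fixes \<nu> \<rho> :: real
  assumes \<nu>: "\<nu> > 0" and \<rho>: "\<rho> > 0"
  shows "pos_moment (gamma_density \<nu> \<rho>) s
    = ennreal (\<rho> powr \<nu> / Gamma \<nu> * Gamma (\<nu> + s) / \<rho> powr (\<nu> + s))"
proof -
  have C: "\<rho> powr \<nu> / Gamma \<nu> > 0" using \<nu> \<rho> by simp
  have "pos_moment (gamma_density \<nu> \<rho>) s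
      = pos_moment (\<lambda>x. \<rho> powr \<nu> / Gamma \<nu> * (x powr (\<nu> - 1) * exp (- \<rho> * x))) s"
    by (intro pos_moment_cong) (simp add: gamma_density_def)
  also have "\<dots> = ennreal (\<rho> powr \<nu> / Gamma \<nu>) * pos_moment (\<lambda>x. x powr (\<nu> - 1) * exp (- \<rho> * x)) s"
    using C by (intro pos_moment_cmult) auto
  also have "\<dots> = ennreal (\<rho> powr \<nu> / Gamma \<nu> * Gamma (\<nu> + s) / \<rho> powr (\<nu> + s))"
    using C \<nu> \<rho> by (subst pos_moment_powr_exp) (auto simp flip: ennreal_mult')
  finally show ?thesis .
qed

lemma gamma_prior_assumptions:
  fixes \<nu> \<rho> :: real
  assumes \<nu>: "\<nu> > 0" and \<rho>: "\<rho> > 0"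
  defines "f \<equiv> gamma_density \<nu> \<rho>"
  shows "prior_on_pos (density lborel (\<lambda>x. ennreal (f x)))"
    and "A1 (density lborel (\<lambda>x. ennreal (f x))) f"
    and "A2 f"
    and "A3_rho f \<rho>"
proof -
  define C where "C = \<rho> powr \<nu> / Gamma \<nu>"
  have C: "C > 0" using \<nu> \<rho> by (simp add: C_def)
  have f_pos: "f x = C * (x powr (\<nu> - 1) * exp (- \<rho> * x))" if "x > 0" for x
    using that by (simp add: f_def gamma_density_def C_def)
  have f_nonpos: "f x = 0" if "x \<le> 0" for x
    using that by (simp add: f_def gamma_density_def)
  have [measurable]: "f \<in> borel_measurable borel"
    unfolding f_def gamma_density_def by measurable
  have moment: "pos_moment f s = ennreal (C * Gamma (\<nu> + s) / \<rho> powr (\<nu> + s))" for s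
    unfolding f_def C_def using \<nu> \<rho> by (rule pos_moment_gamma_density)
  have "pos_moment f 0 = 1"
    using moment[of 0] \<nu> \<rho> by (simp add: C_def Gamma_real_pos less_imp_neq[symmetric])
  with f_nonpos show "prior_on_pos (density lborel (\<lambda>x. ennreal (f x)))"
    by (intro prior_on_pos_density) auto
  have "f x \<ge> 0" for x
    using C by (cases "x > 0") (simp_all add: f_pos f_nonpos)
  then show "A1 (density lborel (\<lambda>x. ennreal (f x))) f"
    by (intro A1_density) auto
  show "A2 f"
  proof (rule A2I[of 1 "C * exp (- \<rho>)" f "\<nu> - 1" "\<lambda>\<alpha>. C * exp (- \<rho> * \<alpha>)"])
    fix \<alpha> :: real assume \<alpha>: "\<alpha> \<in> {0<..<1}"
    then show "f \<alpha> = \<alpha> powr (\<nu> - 1) * (C * exp (- \<rho> * \<alpha>))"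
      by (simp add: f_pos)
    have "exp (- \<rho>) \<le> exp (- \<rho> * \<alpha>)" "exp (- \<rho> * \<alpha>) \<le> 1"
      using \<alpha> \<rho> by (auto simp: mult_le_cancel_left1)
    then show "C * exp (- \<rho>) \<le> C * exp (- \<rho> * \<alpha>) \<and> C * exp (- \<rho> * \<alpha>) \<le> C"
      using C by simp
  qed (use C in auto)
  have "A3_with f \<rho> \<nu>"
    using C \<nu> \<rho> by (intro A3_with_of_gamma_moment_bound) (auto simp: moment)
  with \<nu> \<rho> show "A3_rho f \<rho>" unfolding A3_rho_def by blast
qed

theorem lemma1:
  shows
   "(\<forall>(M::real measure) f c. prior_on_pos M \<and> emeasure M {0<..c} = 1 \<and> A1 M f \<and> A2 f
        \<longrightarrow> A3 f \<and> (\<forall>\<rho>>0. A3_rho f \<rho>))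
    \<and> (\<forall>a d p. a > 0 \<and> d > 0 \<and> p > 1 \<longrightarrow>
        (let f = gen_gamma_density a d p;
             M = density lborel (\<lambda>x. ennreal (f x))
         in prior_on_pos M \<and> A1 M f \<and> A2 f \<and> A3 f \<and> (\<forall>\<rho>>0. A3_rho f \<rho>)))
    \<and> (\<forall>\<nu> \<rho>. \<nu> > 0 \<and> \<rho> > 0 \<longrightarrow>
        (let f = gamma_density \<nu> \<rho>;
             M = density lborel (\<lambda>x. ennreal (f x))
         in prior_on_pos M \<and> A1 M f \<and> A2 f \<and> A3 f \<and> A3_rho f \<rho>))"
  unfolding Let_def
  by (intro conjI allI impI; (elim conjE)?)
    (blast intro: A3I zero_less_one A3_rho_of_bounded_support
        gen_gamma_prior_assumptions gamma_prior_assumptions)+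

end
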